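(* Consider mixed site/bond percolation on the $m\times m$ grid $[m]^2$ in which each node is open with probability $p$ and each link is open with probability $q$, all independently. Then the size of the largest bond-connected component stochastically dominates the size of the largest open component in site percolation on $[m]^2$ in which each node is open independently with probability $pq^2$.
   Context: The grid has node set $[m]^2=\{1,\dots,m\}^2$, and links between pairs of nodes at $\ell_1$ distance one (with the same adjacency used in both models). In the mixed model, two nodes $u,v$ are bond-connected if there is a sequence of open nodes $u=u_1,\dots,u_\ell=v$ such that each link $u_iu_{i+1}$ is open; bond-connected components are the classes of this relation. In site percolation, open components are the maximal sets of open nodes connected through adjacent open nodes. *)

theory Defs
  imports "HOL-Probability.Probability"
begin

type_synonym node = "nat \<times> nat"

definition grid :: "nat \<Rightarrow> node set" where
  "grid m = {1..m} \<times> {1..m}"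

definition adj :: "node \<Rightarrow> node \<Rightarrow> bool" where
  "adj u v \<longleftrightarrow> \<bar>int (fst u) - int (fst v)\<bar> + \<bar>int (snd u) - int (snd v)\<bar> = 1"

definition links :: "nat \<Rightarrow> node set set" where
  "links m = {{u, v} | u v. u \<in> grid m \<and> v \<in> grid m \<and> adj u v}"

definition bond_step :: "nat \<Rightarrow> (node \<Rightarrow> bool) \<Rightarrow> (node set \<Rightarrow> bool) \<Rightarrow> node \<Rightarrow> node \<Rightarrow> bool" where
  "bond_step m \<omega> \<eta> x y \<longleftrightarrow> x \<in> grid m \<and> y \<in> grid m \<and> \<omega> x \<and> \<omega> y \<and> adj x y \<and> \<eta> {x, y}"

definition bond_connected :: "nat \<Rightarrow> (node \<Rightarrow> bool) \<Rightarrow> (node set \<Rightarrow> bool) \<Rightarrow> node \<Rightarrow> node \<Rightarrow> bool" where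
  "bond_connected m \<omega> \<eta> u v \<longleftrightarrow> u \<in> grid m \<and> \<omega> u \<and> (bond_step m \<omega> \<eta>)\<^sup>*\<^sup>* u v"

definition bond_components :: "nat \<Rightarrow> (node \<Rightarrow> bool) \<Rightarrow> (node set \<Rightarrow> bool) \<Rightarrow> node set set" where
  "bond_components m \<omega> \<eta> = {{v. bond_connected m \<omega> \<eta> u v} | u. u \<in> grid m \<and> \<omega> u}"

definition largest_bond :: "nat \<Rightarrow> (node \<Rightarrow> bool) \<Rightarrow> (node set \<Rightarrow> bool) \<Rightarrow> nat" where
  "largest_bond m \<omega> \<eta> = Max (insert 0 (card ` bond_components m \<omega> \<eta>))"

definition site_step :: "nat \<Rightarrow> (node \<Rightarrow> bool) \<Rightarrow> node \<Rightarrow> node \<Rightarrow> bool" where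
  "site_step m \<omega> x y \<longleftrightarrow> x \<in> grid m \<and> y \<in> grid m \<and> \<omega> x \<and> \<omega> y \<and> adj x y"

definition site_components :: "nat \<Rightarrow> (node \<Rightarrow> bool) \<Rightarrow> node set set" where
  "site_components m \<omega> = {{v. (site_step m \<omega>)\<^sup>*\<^sup>* u v} | u. u \<in> grid m \<and> \<omega> u}"

definition largest_site :: "nat \<Rightarrow> (node \<Rightarrow> bool) \<Rightarrow> nat" where
  "largest_site m \<omega> = Max (insert 0 (card ` site_components m \<omega>))"

definition node_pmf :: "nat \<Rightarrow> real \<Rightarrow> (node \<Rightarrow> bool) pmf" where
  "node_pmf m p = Pi_pmf (grid m) False (\<lambda>_. bernoulli_pmf p)"

definition link_pmf :: "nat \<Rightarrow> real \<Rightarrow> (node set \<Rightarrow> bool) pmf" where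
  "link_pmf m q = Pi_pmf (links m) False (\<lambda>_. bernoulli_pmf q)"

definition mixed_pmf :: "nat \<Rightarrow> real \<Rightarrow> real \<Rightarrow> ((node \<Rightarrow> bool) \<times> (node set \<Rightarrow> bool)) pmf" where
  "mixed_pmf m p q = pair_pmf (node_pmf m p) (link_pmf m q)"

definition stoch_dominates :: "nat pmf \<Rightarrow> nat pmf \<Rightarrow> bool" where
  "stoch_dominates X Y \<longleftrightarrow> (\<forall>k. measure_pmf.prob Y {k..} \<le> measure_pmf.prob X {k..})"

end

theory Submission
  imports Defs
begin

text \<open>
  Couple the two models on one probability space: every node x carries three independent
  labels, "x is open" (probability p), "the link from x to its right neighbour is open" and
  "the link from x to its upper neighbour is open" (probability q each). Reading the labels as a
  mixed configuration gives exactly the mixed model, because every link has a unique lower-left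
  endpoint. Declaring x site-open when all three labels hold gives site percolation with
  parameter p q^2. Two adjacent site-open nodes are then both open and the link between
  them is open (it is owned by one of them), so every site-open cluster lies inside a
  bond-connected component, and the largest bond component is pointwise at least as large.
\<close>

subsection \<open>Product measures\<close>

lemma map_pmf_conj_bernoulli:
  assumes "0 \<le> p" "p \<le> 1" "0 \<le> q" "q \<le> 1"
  shows "map_pmf (\<lambda>(a, b). a \<and> b) (pair_pmf (bernoulli_pmf p) (bernoulli_pmf q))
           = bernoulli_pmf (p * q)"
proof (rule pmf_eqI)
  fix i :: bool
  let ?M = "pair_pmf (bernoulli_pmf p) (bernoulli_pmf q)"
  have pq: "0 \<le> p * q" "p * q \<le> 1"
    using assms by (auto intro: mult_le_one)
  have conj_True: "(\<lambda>(a, b). a \<and> b) -` {True} = {(True, True)}" by auto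
  have conj_False: "(\<lambda>(a, b). a \<and> b) -` {False} = UNIV - {(True, True)}" by auto
  have "measure_pmf.prob ?M (UNIV - {(True, True)}) = 1 - measure_pmf.prob ?M {(True, True)}"
    using measure_pmf.prob_compl[of "{(True, True)}" ?M] by simp
  then show "pmf (map_pmf (\<lambda>(a, b). a \<and> b) ?M) i = pmf (bernoulli_pmf (p * q)) i"
    using assms pq
    by (cases i) (simp_all add: pmf_map conj_True conj_False measure_pmf_single pmf_pair)
qed

lemma Pi_pmf_pair_pmf:
  assumes "finite A"
  shows "Pi_pmf A (d1, d2) (\<lambda>x. pair_pmf (P x) (Q x)) =
         map_pmf (\<lambda>(f, g) x. (f x, g x)) (pair_pmf (Pi_pmf A d1 P) (Pi_pmf A d2 Q))"
proof (rule pmf_eqI)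
  fix t :: "'a \<Rightarrow> 'b \<times> 'c"
  let ?zip = "\<lambda>(f, g) x. (f x, g x)"
  have inj: "inj (?zip :: ('a \<Rightarrow> 'b) \<times> ('a \<Rightarrow> 'c) \<Rightarrow> _)"
    by (auto simp: inj_def fun_eq_iff)
  have t: "t = ?zip (fst \<circ> t, snd \<circ> t)" by auto
  have "pmf (map_pmf ?zip (pair_pmf (Pi_pmf A d1 P) (Pi_pmf A d2 Q))) t
      = pmf (pair_pmf (Pi_pmf A d1 P) (Pi_pmf A d2 Q)) (fst \<circ> t, snd \<circ> t)"
    by (subst t, subst pmf_map_inj'[OF inj]) simp
  also have "\<dots> = pmf (Pi_pmf A (d1, d2) (\<lambda>x. pair_pmf (P x) (Q x))) t"
    using assms
    by (simp add: pmf_pair pmf_Pi prod.distrib[symmetric])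
      (auto simp: prod_eq_iff intro!: prod.cong, metis pmf_pair prod.collapse)
  finally show "pmf (Pi_pmf A (d1, d2) (\<lambda>x. pair_pmf (P x) (Q x))) t =
      pmf (map_pmf ?zip (pair_pmf (Pi_pmf A d1 P) (Pi_pmf A d2 Q))) t" by simp
qed

lemma Pi_pmf_reindex:
  assumes "finite C" "B \<subseteq> C" "bij_betw h A B" "\<And>x. x \<notin> A \<Longrightarrow> h x \<notin> B"
  shows "Pi_pmf A dflt (\<lambda>_. f)
           = map_pmf (\<lambda>g x. if h x \<in> B then g (h x) else dflt) (Pi_pmf C dflt (\<lambda>_. f))"
proof -
  have "finite A"
    using assms(1-3) by (metis bij_betw_finite finite_subset)
  then have "Pi_pmf A dflt (\<lambda>_. f) = map_pmf (\<lambda>g. g \<circ> h) (Pi_pmf B dflt (\<lambda>_. f))"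
    using assms(3,4) by (rule Pi_pmf_bij_betw)
  also have "\<dots> = map_pmf (\<lambda>g x. if h x \<in> B then g (h x) else dflt) (Pi_pmf C dflt (\<lambda>_. f))"
    by (simp add: Pi_pmf_subset[OF assms(1,2)] map_pmf_comp o_def)
  finally show ?thesis .
qed

lemma stoch_dominates_map_pmf:
  assumes "\<And>x. g x \<le> f x"
  shows "stoch_dominates (map_pmf f M) (map_pmf g M)"
  unfolding stoch_dominates_def measure_map_pmf
proof
  fix k :: nat
  have "g -` {k..} \<subseteq> f -` {k..}"
    by (auto intro: order_trans[OF _ assms])
  then show "measure_pmf.prob M (g -` {k..}) \<le> measure_pmf.prob M (f -` {k..})"
    by (rule measure_pmf.finite_measure_mono) simp
qed

subsection \<open>Links of the grid and their lower-left endpoints\<close>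

definition right_nbr :: "node \<Rightarrow> node" where
  "right_nbr x = (Suc (fst x), snd x)"

definition up_nbr :: "node \<Rightarrow> node" where
  "up_nbr x = (fst x, Suc (snd x))"

definition horiz_base :: "nat \<Rightarrow> node set" where
  "horiz_base m = {x \<in> grid m. fst x < m}"

definition vert_base :: "nat \<Rightarrow> node set" where
  "vert_base m = {x \<in> grid m. snd x < m}"

definition horiz_links :: "nat \<Rightarrow> node set set" where
  "horiz_links m = (\<lambda>x. {x, right_nbr x}) ` horiz_base m"

definition vert_links :: "nat \<Rightarrow> node set set" where
  "vert_links m = (\<lambda>x. {x, up_nbr x}) ` vert_base m"

definition lower_left :: "node set \<Rightarrow> node" where
  "lower_left e = (Min (fst ` e), Min (snd ` e))"

text \<open>Outside L the owner is the junk node (0, 0), which lies outside the grid.\<close>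
definition owner :: "node set set \<Rightarrow> node set \<Rightarrow> node" where
  "owner L e = (if e \<in> L then lower_left e else (0, 0))"

lemma lower_left_right_nbr [simp]: "lower_left {x, right_nbr x} = x"
  by (cases x) (auto simp: lower_left_def right_nbr_def)

lemma lower_left_up_nbr [simp]: "lower_left {x, up_nbr x} = x"
  by (cases x) (auto simp: lower_left_def up_nbr_def)

lemma finite_grid [simp]: "finite (grid m)"
  by (simp add: grid_def)

lemma zero_notin_grid [simp]: "(0, 0) \<notin> grid m"
  by (simp add: grid_def)

lemma horiz_base_subset_grid: "horiz_base m \<subseteq> grid m"
  by (auto simp: horiz_base_def)

lemma vert_base_subset_grid: "vert_base m \<subseteq> grid m"
  by (auto simp: vert_base_def)

lemma finite_horiz_links [simp]: "finite (horiz_links m)"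
  using finite_subset[OF horiz_base_subset_grid] by (simp add: horiz_links_def)

lemma finite_vert_links [simp]: "finite (vert_links m)"
  using finite_subset[OF vert_base_subset_grid] by (simp add: vert_links_def)

lemma horiz_vert_links_disjoint: "horiz_links m \<inter> vert_links m = {}"
  by (auto simp: horiz_links_def vert_links_def right_nbr_def up_nbr_def doubleton_eq_iff)

lemma bij_betw_owner:
  assumes "\<And>x. x \<in> A \<Longrightarrow> lower_left {x, n x} = x"
  shows "bij_betw (owner ((\<lambda>x. {x, n x}) ` A)) ((\<lambda>x. {x, n x}) ` A) A"
proof -
  have "owner ((\<lambda>x. {x, n x}) ` A) ` (\<lambda>x. {x, n x}) ` A = A"
    using assms by (force simp: owner_def image_image)
  then show ?thesis
    using assms unfolding bij_betw_def inj_on_def owner_def by auto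
qed

lemma adj_iff:
  "adj (a, b) (c, d) \<longleftrightarrow>
     (c = Suc a \<and> d = b) \<or> (a = Suc c \<and> d = b) \<or> (c = a \<and> d = Suc b) \<or> (c = a \<and> b = Suc d)"
  unfolding adj_def by (simp add: abs_if) arith

lemma adjacent_link_cases:
  assumes "x \<in> grid m" "y \<in> grid m" "adj x y"
  obtains (horiz) z where "z \<in> {x, y}" "z \<in> horiz_base m" "{x, y} = {z, right_nbr z}"
    | (vert) z where "z \<in> {x, y}" "z \<in> vert_base m" "{x, y} = {z, up_nbr z}"
proof -
  obtain a b c d where xy: "x = (a, b)" "y = (c, d)" by fastforce
  from assms(3) consider "c = Suc a \<and> d = b" | "a = Suc c \<and> d = b" | "c = a \<and> d = Suc b"
    | "c = a \<and> b = Suc d"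
    unfolding xy adj_iff by blast
  then show ?thesis
  proof cases
    case 1
    then show ?thesis
      using assms(1,2) horiz[of x] by (auto simp: xy grid_def horiz_base_def right_nbr_def)
  next
    case 2
    then show ?thesis
      using assms(1,2) horiz[of y] by (auto simp: xy grid_def horiz_base_def right_nbr_def)
  next
    case 3
    then show ?thesis
      using assms(1,2) vert[of x] by (auto simp: xy grid_def vert_base_def up_nbr_def)
  next
    case 4
    then show ?thesis
      using assms(1,2) vert[of y] by (auto simp: xy grid_def vert_base_def up_nbr_def)
  qed
qed

lemma links_eq_horiz_vert: "links m = horiz_links m \<union> vert_links m"
proof
  show "links m \<subseteq> horiz_links m \<union> vert_links m"
  proof
    fix e
    assume "e \<in> links m"
    then obtain x y where e: "e = {x, y}" and xy: "x \<in> grid m" "y \<in> grid m" "adj x y"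
      by (auto simp: links_def)
    from xy show "e \<in> horiz_links m \<union> vert_links m"
      by (cases rule: adjacent_link_cases) (auto simp: e horiz_links_def vert_links_def)
  qed
next
  have "{x, right_nbr x} \<in> links m" if "x \<in> horiz_base m" for x
    using that unfolding links_def
    by (cases x, intro CollectI exI[of _ x] exI[of _ "right_nbr x"])
      (auto simp: horiz_base_def grid_def right_nbr_def adj_iff)
  moreover have "{x, up_nbr x} \<in> links m" if "x \<in> vert_base m" for x
    using that unfolding links_def
    by (cases x, intro CollectI exI[of _ x] exI[of _ "up_nbr x"])
      (auto simp: vert_base_def grid_def up_nbr_def adj_iff)
  ultimately show "horiz_links m \<union> vert_links m \<subseteq> links m"
    by (auto simp: horiz_links_def vert_links_def)
qed

lemma Pi_pmf_links_lower_left: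
  assumes "A \<subseteq> grid m" "\<And>x. x \<in> A \<Longrightarrow> lower_left {x, n x} = x"
  defines "L \<equiv> (\<lambda>x. {x, n x}) ` A"
  shows "Pi_pmf L dflt (\<lambda>_. f)
           = map_pmf (\<lambda>g e. if e \<in> L then g (lower_left e) else dflt) (Pi_pmf (grid m) dflt (\<lambda>_. f))"
proof -
  have bij: "bij_betw (owner L) L A"
    unfolding L_def using assms(2) by (rule bij_betw_owner)
  have outside: "owner L e \<notin> A" if "e \<notin> L" for e
    using that assms(1) by (auto simp: owner_def)
  have "Pi_pmf L dflt (\<lambda>_. f) = map_pmf (\<lambda>g e. if owner L e \<in> A then g (owner L e) else dflt)
          (Pi_pmf (grid m) dflt (\<lambda>_. f))"
    using finite_grid assms(1) bij outside by (rule Pi_pmf_reindex)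
  also have "(\<lambda>g e. if owner L e \<in> A then g (owner L e) else dflt)
      = (\<lambda>g e. if e \<in> L then g (lower_left e) else dflt)"
    using bij_betw_apply[OF bij] outside by (auto simp: fun_eq_iff owner_def)
  finally show ?thesis .
qed

definition link_field :: "nat \<Rightarrow> (node \<Rightarrow> bool) \<Rightarrow> (node \<Rightarrow> bool) \<Rightarrow> node set \<Rightarrow> bool" where
  "link_field m R U e =
     (if e \<in> horiz_links m then R (lower_left e)
      else if e \<in> vert_links m then U (lower_left e) else False)"

lemma link_pmf_eq_link_field:
  "link_pmf m q = map_pmf (\<lambda>(R, U). link_field m R U)
     (pair_pmf (Pi_pmf (grid m) False (\<lambda>_. bernoulli_pmf q)) (Pi_pmf (grid m) False (\<lambda>_. bernoulli_pmf q)))"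
proof -
  have horiz: "Pi_pmf (horiz_links m) False (\<lambda>_. bernoulli_pmf q) =
      map_pmf (\<lambda>g e. if e \<in> horiz_links m then g (lower_left e) else False)
        (Pi_pmf (grid m) False (\<lambda>_. bernoulli_pmf q))"
    unfolding horiz_links_def by (rule Pi_pmf_links_lower_left[OF horiz_base_subset_grid]) simp
  have vert: "Pi_pmf (vert_links m) False (\<lambda>_. bernoulli_pmf q) =
      map_pmf (\<lambda>g e. if e \<in> vert_links m then g (lower_left e) else False)
        (Pi_pmf (grid m) False (\<lambda>_. bernoulli_pmf q))"
    unfolding vert_links_def by (rule Pi_pmf_links_lower_left[OF vert_base_subset_grid]) simp
  show ?thesis
    unfolding link_pmf_def links_eq_horiz_vert
      Pi_pmf_union[OF finite_horiz_links finite_vert_links horiz_vert_links_disjoint]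
      horiz vert map_pair[symmetric] map_pmf_comp
    by (intro map_pmf_cong) (auto simp: fun_eq_iff link_field_def split: if_splits)
qed

subsection \<open>The coupling\<close>

text \<open>A node label records whether the node, its link to the right and its link upwards are open.\<close>
definition label_pmf :: "real \<Rightarrow> real \<Rightarrow> (bool \<times> bool \<times> bool) pmf" where
  "label_pmf p q = pair_pmf (bernoulli_pmf p) (pair_pmf (bernoulli_pmf q) (bernoulli_pmf q))"

definition labels_pmf :: "nat \<Rightarrow> real \<Rightarrow> real \<Rightarrow> (node \<Rightarrow> bool \<times> bool \<times> bool) pmf" where
  "labels_pmf m p q = Pi_pmf (grid m) (False, False, False) (\<lambda>_. label_pmf p q)"

definition site_config :: "(node \<Rightarrow> bool \<times> bool \<times> bool) \<Rightarrow> node \<Rightarrow> bool" where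
  "site_config t = (\<lambda>(a, b, c). a \<and> b \<and> c) \<circ> t"

definition mixed_config ::
    "nat \<Rightarrow> (node \<Rightarrow> bool \<times> bool \<times> bool) \<Rightarrow> (node \<Rightarrow> bool) \<times> (node set \<Rightarrow> bool)" where
  "mixed_config m t = (fst \<circ> t, link_field m (fst \<circ> snd \<circ> t) (snd \<circ> snd \<circ> t))"

lemma map_pmf_label_pmf:
  assumes "0 \<le> p" "p \<le> 1" "0 \<le> q" "q \<le> 1"
  shows "map_pmf (\<lambda>(a, b, c). a \<and> b \<and> c) (label_pmf p q) = bernoulli_pmf (p * q^2)"
proof -
  have "0 \<le> q * q" "q * q \<le> 1"
    using assms by (auto intro: mult_le_one)
  moreover have "map_pmf (\<lambda>(a, b, c). a \<and> b \<and> c) (label_pmf p q)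
      = map_pmf (\<lambda>(a, b). a \<and> b)
          (pair_pmf (bernoulli_pmf p)
             (map_pmf (\<lambda>(a, b). a \<and> b) (pair_pmf (bernoulli_pmf q) (bernoulli_pmf q))))"
    unfolding label_pmf_def pair_map_pmf2 map_pmf_comp by (simp add: case_prod_unfold)
  ultimately show ?thesis
    using assms by (simp add: map_pmf_conj_bernoulli power2_eq_square)
qed

lemma node_pmf_eq_site_config:
  assumes "0 \<le> p" "p \<le> 1" "0 \<le> q" "q \<le> 1"
  shows "node_pmf m (p * q^2) = map_pmf site_config (labels_pmf m p q)"
  unfolding node_pmf_def labels_pmf_def map_pmf_label_pmf[OF assms, symmetric]
  by (subst Pi_pmf_map[OF finite_grid, where dflt = "(False, False, False)"])
    (simp_all add: site_config_def[abs_def])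

lemma mixed_pmf_eq_mixed_config: "mixed_pmf m p q = map_pmf (mixed_config m) (labels_pmf m p q)"
proof -
  have labels: "labels_pmf m p q = map_pmf (\<lambda>(f, g) x. (f x, g x))
      (pair_pmf (node_pmf m p)
         (Pi_pmf (grid m) (False, False) (\<lambda>_. pair_pmf (bernoulli_pmf q) (bernoulli_pmf q))))"
    unfolding labels_pmf_def label_pmf_def node_pmf_def by (rule Pi_pmf_pair_pmf) simp
  have links: "Pi_pmf (grid m) (False, False) (\<lambda>_. pair_pmf (bernoulli_pmf q) (bernoulli_pmf q))
      = map_pmf (\<lambda>(f, g) x. (f x, g x))
          (pair_pmf (Pi_pmf (grid m) False (\<lambda>_. bernoulli_pmf q))
             (Pi_pmf (grid m) False (\<lambda>_. bernoulli_pmf q)))"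
    by (rule Pi_pmf_pair_pmf) simp
  show ?thesis
    unfolding mixed_pmf_def link_pmf_eq_link_field labels links pair_map_pmf2 map_pmf_comp
      map_pair[symmetric]
    by (simp add: mixed_config_def case_prod_unfold o_def apsnd_def map_prod_def)
qed

subsection \<open>Monotonicity of the largest component\<close>

lemma bond_connected_in_grid:
  assumes "bond_connected m \<omega> \<eta> u v"
  shows "v \<in> grid m"
proof -
  have "(bond_step m \<omega> \<eta>)\<^sup>*\<^sup>* u v" "u \<in> grid m"
    using assms by (simp_all add: bond_connected_def)
  then show ?thesis
    by (induction rule: rtranclp_induct) (auto simp: bond_step_def)
qed

lemma finite_bond_components: "finite (bond_components m \<omega> \<eta>)"
proof -
  have "bond_components m \<omega> \<eta> \<subseteq> (\<lambda>u. {v. bond_connected m \<omega> \<eta> u v}) ` grid m"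
    by (auto simp: bond_components_def)
  then show ?thesis
    by (rule finite_subset) simp
qed

lemma finite_site_components: "finite (site_components m \<omega>)"
proof -
  have "site_components m \<omega> \<subseteq> (\<lambda>u. {v. (site_step m \<omega>)\<^sup>*\<^sup>* u v}) ` grid m"
    by (auto simp: site_components_def)
  then show ?thesis
    by (rule finite_subset) simp
qed

lemma largest_site_le_largest_bond:
  assumes step: "\<And>x y. site_step m \<omega>' x y \<Longrightarrow> bond_step m \<omega> \<eta> x y"
    and open_node: "\<And>x. \<omega>' x \<Longrightarrow> \<omega> x"
  shows "largest_site m \<omega>' \<le> largest_bond m \<omega> \<eta>"
proof -
  have "card C \<le> largest_bond m \<omega> \<eta>" if comp: "C \<in> site_components m \<omega>'" for C
  proof -
    obtain u where u: "u \<in> grid m" "\<omega>' u" and C: "C = {v. (site_step m \<omega>')\<^sup>*\<^sup>* u v}"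
      using comp unfolding site_components_def by blast
    let ?D = "{v. bond_connected m \<omega> \<eta> u v}"
    have "(site_step m \<omega>')\<^sup>*\<^sup>* \<le> (bond_step m \<omega> \<eta>)\<^sup>*\<^sup>*"
      using step by (intro rtranclp_mono) blast
    then have "C \<subseteq> ?D"
      using u open_node by (auto simp: C bond_connected_def)
    moreover have "finite ?D"
      using bond_connected_in_grid by (intro finite_subset[OF _ finite_grid]) blast
    moreover have "?D \<in> bond_components m \<omega> \<eta>"
      using u open_node unfolding bond_components_def by blast
    ultimately show ?thesis
      unfolding largest_bond_def
      by (meson card_mono finite_bond_components finite_imageI finite_insert
          Max_ge image_eqI insertI2 order_trans)
  qed
  then show ?thesis
    by (simp add: largest_site_def finite_site_components)
qed

lemma site_step_imp_bond_step:
  assumes "site_step m (site_config t) x y"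
  shows "bond_step m (fst (mixed_config m t)) (snd (mixed_config m t)) x y"
proof -
  have grid: "x \<in> grid m" "y \<in> grid m" "adj x y"
    and labels: "t x = (True, True, True)" "t y = (True, True, True)"
    using assms by (auto simp: site_step_def site_config_def split: prod.splits)
  from grid have "link_field m (fst \<circ> snd \<circ> t) (snd \<circ> snd \<circ> t) {x, y}"
  proof (cases rule: adjacent_link_cases)
    case (horiz z)
    then have "t z = (True, True, True)"
      using labels by auto
    with horiz show ?thesis
      by (auto simp: link_field_def horiz_links_def)
  next
    case (vert z)
    then have "{x, y} \<notin> horiz_links m"
      using horiz_vert_links_disjoint by (auto simp: vert_links_def)
    moreover have "t z = (True, True, True)"
      using vert(1) labels by auto
    ultimately show ?thesis
      using vert by (auto simp: link_field_def vert_links_def)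
  qed
  then show ?thesis
    using grid labels by (simp add: bond_step_def mixed_config_def)
qed

lemma largest_site_config_le:
  "largest_site m (site_config t) \<le> largest_bond m (fst (mixed_config m t)) (snd (mixed_config m t))"
  by (rule largest_site_le_largest_bond[OF site_step_imp_bond_step])
    (auto simp: site_config_def mixed_config_def split: prod.splits)

theorem lemma4:
  fixes m :: nat and p q :: real
  assumes "0 \<le> p" "p \<le> 1" "0 \<le> q" "q \<le> 1"
  shows "stoch_dominates
           (map_pmf (\<lambda>(\<omega>, \<eta>). largest_bond m \<omega> \<eta>) (mixed_pmf m p q))
           (map_pmf (largest_site m) (node_pmf m (p * q^2)))"
proof -
  have "stoch_dominates
      (map_pmf (\<lambda>t. case mixed_config m t of (\<omega>, \<eta>) \<Rightarrow> largest_bond m \<omega> \<eta>) (labels_pmf m p q))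
      (map_pmf (\<lambda>t. largest_site m (site_config t)) (labels_pmf m p q))"
    using largest_site_config_le by (intro stoch_dominates_map_pmf) (simp add: case_prod_unfold)
  then show ?thesis
    by (simp add: node_pmf_eq_site_config[OF assms] mixed_pmf_eq_mixed_config map_pmf_comp)
qed

end
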